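(* Let $n,k$ be integers with $2\le 2k\le n-4$, let $\lambda\in\overline{\mathcal{U}}_{T_{n,n-2k}}$, and let $Y=\mathrm{KN}(S_\lambda)$ with hook lengths $h_{i,j}$. Then $h_{i,1}=h_{1,i}$ for every $1\le i\le n-2$.
   Context: A partition of $N$ into distinct parts is a sequence $\lambda=(\lambda_1<\dots<\lambda_t)$ of positive integers with sum $N$ and $t\ge 2$, identified with its set of parts. Missing parts: $\mathcal{M}_\lambda=\{1,\dots,\lambda_t\}\setminus\lambda$. $\lambda$ is refinable if two distinct missing parts sum to a part of $\lambda$, unrefinable otherwise; $\mathcal{U}_N$ is the set of unrefinable partitions of $N$. An element of $\mathcal{U}_N$ is maximal if its largest part is the maximum of the largest parts of elements of $\mathcal{U}_N$; $\widetilde{\mathcal{U}}_N$ is the set of these and $\overline{\mathcal{U}}_N=\{\lambda\in\widetilde{\mathcal{U}}_N:\#\mathcal{M}_\lambda=\lfloor\lambda_t/2\rfloor\}$. $T_n=n(n+1)/2$, $T_{n,d}=T_n-d$. For $\lambda\in\overline{\mathcal{U}}_{T_{n,n-2k}}$ with $2\le 2k\le n-4$ one knows $\lambda_t=2n-5$ and $t=n-2$. $S_\lambda=\mathbb{N}_0\setminus\lambda$. The Keith–Nath transformation sends a set $S\subseteq\mathbb{N}_0$ with $0\in S$ and finite complement to the Young diagram $\mathrm{KN}(S)$ whose boundary is the lattice path that, starting at the origin, takes for $j=0,1,\dots,\max(\mathbb{N}_0\setminus S)$ an east step if $j\in S$ and a north step otherwise. Diagrams are in English convention; $h_{i,j}$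 is the hook length of the cell in row $i$ (from the top) and column $j$ (from the left): (cells to its right in its row) + (cells below it in its column) + 1. *)

theory Defs
  imports Main
begin

definition distinct_partition :: "nat \<Rightarrow> nat set \<Rightarrow> bool" where
  "distinct_partition N lam \<longleftrightarrow> finite lam \<and> 0 \<notin> lam \<and> \<Sum>lam = N \<and> card lam \<ge> 2"

definition missing :: "nat set \<Rightarrow> nat set" where
  "missing lam = {1..Max lam} - lam"

definition refinable :: "nat set \<Rightarrow> bool" where
  "refinable lam \<longleftrightarrow> (\<exists>a\<in>missing lam. \<exists>b\<in>missing lam. a \<noteq> b \<and> a + b \<in> lam)"

definition unref :: "nat \<Rightarrow> nat set set" where
  "unref N = {lam. distinct_partition N lam \<and> \<not> refinable lam}"

definition unref_max :: "nat \<Rightarrow> nat set set" where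
  "unref_max N = {lam \<in> unref N. Max lam = Max (Max ` unref N)}"

definition unref_bar :: "nat \<Rightarrow> nat set set" where
  "unref_bar N = {lam \<in> unref_max N. card (missing lam) = Max lam div 2}"

definition T :: "nat \<Rightarrow> nat" where
  "T n = n * (n + 1) div 2"

definition Td :: "nat \<Rightarrow> nat \<Rightarrow> nat" where
  "Td n d = T n - d"

text \<open>For S with 0 in S and finite complement C = -S,
  the boundary path has, for each c in C, a north step starting at the point
  (card {s in S. s < c}, card {d in C. d < c}). Hence the row (counted from the top,
  English convention, rows 1..card C) at height card {d in C. d < c} = card C - i
  has length card {s in S. s < c}. The diagram is given as its set of cells (i, j),
  i = row from the top, j = column from the left, both 1-based.\<close>
definition KN :: "nat set \<Rightarrow> (nat \<times> nat) set" where
  "KN S = {(i, j). 1 \<le> i \<and> i \<le> card (- S) \<and> 1 \<le> j \<and>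
      (\<exists>c. c \<notin> S \<and> card {d. d \<notin> S \<and> d < c} = card (- S) - i \<and> j \<le> card {s \<in> S. s < c})}"

definition hook :: "(nat \<times> nat) set \<Rightarrow> nat \<Rightarrow> nat \<Rightarrow> nat" where
  "hook Y i j = card {j'. j < j' \<and> (i, j') \<in> Y} + card {i'. i < i' \<and> (i', j) \<in> Y} + 1"

end

theory Submission
  imports Defs
begin

(* Let F be the largest part of lam. Unrefinability forces at least one of x and F - x to be a part
   for every 0 < x < F with 2 x \<noteq> F, and having exactly F div 2 missing parts leaves room for
   only one, so the set S = - lam of non-parts satisfies x \<in> S \<longleftrightarrow> F - x \<notin> S. For even F this
   determines 2 \<Sigma>lam modulo 4 and bounds it from below, which contradicts \<Sigma>lam = T(n,n-2k)
   because F \<ge> 2n - 5 (an explicit unrefinable partition of T(n,n-2k) has the part 2n - 5).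
   For odd F, the Keith-Nath diagram of such an S is self-conjugate: (a, b) \<in> KN S iff c + c' > F,
   where c and c' are the a-th and the b-th largest parts. So all hooks are symmetric. *)

definition top_rank :: "nat set \<Rightarrow> nat \<Rightarrow> nat" where
  "top_rank L c = card {d \<in> L. c \<le> d}"

lemma card_less_add_top_rank:
  assumes "finite L"
  shows "card {d \<in> L. d < c} + top_rank L c = card L"
proof -
  have "{d \<in> L. c \<le> d} = L - {d \<in> L. d < c}" by auto
  then show ?thesis
    unfolding top_rank_def using assms by (simp add: card_Diff_subset card_mono)
qed

lemma top_rank_image:
  assumes "finite L"
  shows "top_rank L ` L = {1..card L}"
proof (rule card_subset_eq)
  have "inj_on (top_rank L) L"
  proof (rule linorder_inj_onI')
    fix c c' assume "c \<in> L" "c' \<in> L" "c < c'"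
    then have "{d \<in> L. c' \<le> d} \<subset> {d \<in> L. c \<le> d}" by (auto simp: not_le[symmetric])
    then have "top_rank L c' < top_rank L c"
      unfolding top_rank_def using assms by (intro psubset_card_mono) auto
    then show "top_rank L c \<noteq> top_rank L c'" by simp
  qed
  then show "card (top_rank L ` L) = card {1..card L}" by (simp add: card_image)
  show "top_rank L ` L \<subseteq> {1..card L}"
  proof
    fix r assume "r \<in> top_rank L ` L"
    then obtain c where "c \<in> L" "r = top_rank L c" by auto
    then show "r \<in> {1..card L}"
      unfolding top_rank_def using assms
      by (auto intro: card_mono simp: Suc_le_eq card_gt_0_iff)
  qed
qed simp

lemma top_rank_image_greater:
  assumes "finite L"
  shows "top_rank L ` {c \<in> L. x < c} = {1..card {d \<in> L. x < d}}"
proof -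
  have "top_rank L c = top_rank {d \<in> L. x < d} c" if "x < c" for c
    unfolding top_rank_def using that by (intro arg_cong[where f = card]) auto
  then have "top_rank L ` {c \<in> L. x < c} = top_rank {d \<in> L. x < d} ` {d \<in> L. x < d}"
    by (intro image_cong) auto
  then show ?thesis using top_rank_image[of "{d \<in> L. x < d}"] assms by simp
qed

lemma mem_KN_Compl:
  assumes "finite L"
  shows "(a, b) \<in> KN (- L) \<longleftrightarrow>
    1 \<le> b \<and> (\<exists>c\<in>L. a = top_rank L c \<and> b \<le> card {s. s \<notin> L \<and> s < c})"
proof -
  have "1 \<le> a \<and> a \<le> card L \<and> card {d \<in> L. d < c} = card L - a \<longleftrightarrow> a = top_rank L c"
    if "c \<in> L" for c
    using card_less_add_top_rank[OF assms, of c] top_rank_image[OF assms] that by auto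
  then show ?thesis
    unfolding KN_def by (auto simp: Collect_conj_eq[symmetric])
qed

text \<open>In numerical-semigroup terms: - L is a symmetric set with Frobenius number F.\<close>
definition symmetric_gaps :: "nat \<Rightarrow> nat set \<Rightarrow> bool" where
  "symmetric_gaps F L \<longleftrightarrow> L \<subseteq> {..F} \<and> (\<forall>x\<le>F. x \<in> L \<longleftrightarrow> F - x \<notin> L)"

lemma symmetric_gaps_card_nonmembers_below:
  assumes "symmetric_gaps F L" and "c \<le> F"
  shows "card {s. s \<notin> L \<and> s < c} = card {d \<in> L. F - c < d}"
proof -
  have L: "L \<subseteq> {..F}" and sym: "\<And>x. x \<le> F \<Longrightarrow> x \<in> L \<longleftrightarrow> F - x \<notin> L"
    using assms(1) unfolding symmetric_gaps_def by blast+
  have "(\<lambda>s. F - s) ` {s. s \<notin> L \<and> s < c} = {d \<in> L. F - c < d}"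
  proof (intro equalityI subsetI)
    fix d assume "d \<in> (\<lambda>s. F - s) ` {s. s \<notin> L \<and> s < c}"
    then obtain s where "s \<notin> L" "s < c" "d = F - s" by blast
    then show "d \<in> {d \<in> L. F - c < d}" using sym[of s] assms(2) by auto
  next
    fix d assume d: "d \<in> {d \<in> L. F - c < d}"
    then have "d \<le> F" using L by auto
    then have "F - d \<notin> L" "F - d < c" "d = F - (F - d)" using d sym[of d] by auto
    then show "d \<in> (\<lambda>s. F - s) ` {s. s \<notin> L \<and> s < c}" by blast
  qed
  moreover have "inj_on (\<lambda>s. F - s) {s. s \<notin> L \<and> s < c}"
    using assms(2) by (intro inj_onI) auto
  ultimately show ?thesis by (metis card_image)
qed

lemma mem_KN_Compl_symmetric_gaps:
  assumes "finite L" and "symmetric_gaps F L"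
  shows "(a, b) \<in> KN (- L) \<longleftrightarrow>
    (\<exists>c\<in>L. \<exists>c'\<in>L. a = top_rank L c \<and> b = top_rank L c' \<and> F < c + c')"
proof -
  have "1 \<le> b \<and> b \<le> card {s. s \<notin> L \<and> s < c} \<longleftrightarrow> (\<exists>c'\<in>L. b = top_rank L c' \<and> F < c + c')"
    if "c \<in> L" for c
  proof -
    have "c \<le> F" using that assms(2) unfolding symmetric_gaps_def by blast
    then have "F - c < c' \<longleftrightarrow> F < c + c'" for c' by arith
    then show ?thesis
      using symmetric_gaps_card_nonmembers_below[OF assms(2) \<open>c \<le> F\<close>]
        top_rank_image_greater[OF assms(1), of "F - c"]
      by (auto simp: image_iff)
  qed
  then show ?thesis
    unfolding mem_KN_Compl[OF assms(1)] by blast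
qed

lemma KN_Compl_symmetric_gaps_transpose:
  assumes "finite L" and "symmetric_gaps F L"
  shows "(i, j) \<in> KN (- L) \<longleftrightarrow> (j, i) \<in> KN (- L)"
proof -
  have "(j, i) \<in> KN (- L)" if "(i, j) \<in> KN (- L)" for i j
  proof -
    from that obtain c c' where "c \<in> L" "c' \<in> L" "i = top_rank L c" "j = top_rank L c'" "F < c + c'"
      unfolding mem_KN_Compl_symmetric_gaps[OF assms] by blast
    moreover from this have "F < c' + c" by simp
    ultimately show ?thesis
      unfolding mem_KN_Compl_symmetric_gaps[OF assms] by blast
  qed
  then show ?thesis by blast
qed

lemma hook_transpose:
  assumes "\<And>i j. (i, j) \<in> Y \<longleftrightarrow> (j, i) \<in> Y"
  shows "hook Y i j = hook Y j i"
proof -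
  have "{j'. j < j' \<and> (i, j') \<in> Y} = {i'. j < i' \<and> (i', i) \<in> Y}"
    "{i'. i < i' \<and> (i', j) \<in> Y} = {j'. i < j' \<and> (j, j') \<in> Y}"
    using assms by blast+
  then show ?thesis unfolding hook_def by simp
qed

lemma unrefinable_complement_mem:
  assumes "finite L" and "L \<noteq> {}" and "\<not> refinable L"
    and "0 < x" and "x < Max L" and "2 * x \<noteq> Max L" and "x \<notin> L"
  shows "Max L - x \<in> L"
proof (rule ccontr)
  assume "Max L - x \<notin> L"
  then have "x \<in> missing L" "Max L - x \<in> missing L"
    using assms(4-7) unfolding missing_def by auto
  moreover have "x + (Max L - x) \<in> L" using assms(1,2,5) by simp
  ultimately show False using assms(3,6) unfolding refinable_def by force
qed

lemma unrefinable_reflect_missing: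
  assumes fin: "finite L" and ne: "L \<noteq> {}" and z: "0 \<notin> L" and nr: "\<not> refinable L"
    and half: "card (missing L) = Max L div 2"
  shows "(\<lambda>x. Max L - x) ` {x \<in> missing L. 2 * x \<noteq> Max L} = L - {Max L}"
proof -
  define F where "F = Max L"
  define M where "M = {x \<in> missing L. 2 * x \<noteq> F}"
  define H where "H = {x. 2 * x = F}"
  have FL: "F \<in> L" and L: "L \<subseteq> {1..F}"
    using fin ne z unfolding F_def by (auto simp: Suc_le_eq gr0I)
  have missing: "missing L = {1..F} - L" unfolding missing_def F_def ..
  have "card (missing L) + card L = F"
    unfolding missing using card_Diff_subset[OF fin L] card_mono[OF _ L] by simp
  then have card_R: "card (L - {F}) = (F - 1) div 2"
    using half FL fin unfolding F_def by simp
  have H: "H = (if even F then {F div 2} else {})" unfolding H_def by auto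
  have "(F - 1) div 2 \<le> card (missing L) - card H"
    using half H unfolding F_def by auto
  also have "\<dots> \<le> card M"
  proof -
    have "M = missing L - H" unfolding M_def H_def by auto
    then show ?thesis by (simp add: diff_card_le_card_Diff H)
  qed
  finally have card_M: "card (L - {F}) \<le> card M" unfolding card_R .
  have into: "(\<lambda>x. F - x) ` M \<subseteq> L - {F}"
  proof (rule image_subsetI)
    fix x assume "x \<in> M"
    then have "0 < x" "x < F" "2 * x \<noteq> F" "x \<notin> L"
      using FL unfolding M_def missing by (auto simp: order_le_less)
    then show "F - x \<in> L - {F}"
      using unrefinable_complement_mem[OF fin ne nr] unfolding F_def by auto
  qed
  have "inj_on (\<lambda>x. F - x) M"
    unfolding M_def missing by (intro inj_onI) auto
  then have "card ((\<lambda>x. F - x) ` M) = card M" by (rule card_image)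
  moreover have "card ((\<lambda>x. F - x) ` M) \<le> card (L - {F})"
    using fin by (intro card_mono[OF _ into]) simp
  ultimately have "card ((\<lambda>x. F - x) ` M) = card (L - {F})" using card_M by simp
  then have "(\<lambda>x. F - x) ` M = L - {F}"
    using fin by (intro card_subset_eq[OF _ into]) simp_all
  then show ?thesis unfolding M_def F_def .
qed

lemma unref_barD:
  assumes "lam \<in> unref_bar N"
  shows "finite lam" and "lam \<noteq> {}" and "0 \<notin> lam" and "\<not> refinable lam"
    and "card (missing lam) = Max lam div 2" and "\<Sum>lam = N" and "lam \<in> unref_max N"
  using assms unfolding unref_bar_def unref_max_def unref_def distinct_partition_def by auto

lemma unref_bar_mem_iff_complement_notin:
  assumes lam: "lam \<in> unref_bar N" and "x \<le> Max lam" and "2 * x \<noteq> Max lam"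
  shows "x \<in> lam \<longleftrightarrow> Max lam - x \<notin> lam"
proof -
  note fin = unref_barD(1)[OF lam] and ne = unref_barD(2)[OF lam] and z = unref_barD(3)[OF lam]
  have top: "Max lam \<in> lam" using fin ne by simp
  consider "x = 0" | "x = Max lam" | "0 < x" "x < Max lam" using assms(2) by linarith
  then show ?thesis
  proof cases
    case 3
    have "Max lam - x \<notin> lam" if "x \<in> lam"
    proof -
      have "x \<in> lam - {Max lam}" using that 3 by simp
      then obtain m where "m \<in> missing lam" "x = Max lam - m"
        using unrefinable_reflect_missing[OF unref_barD(1-5)[OF lam]] by auto
      then show ?thesis unfolding missing_def by auto
    qed
    moreover have "x \<notin> lam \<Longrightarrow> Max lam - x \<in> lam"
      using unrefinable_complement_mem[OF fin ne unref_barD(4)[OF lam] _ _ assms(3)] 3 by blast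
    ultimately show ?thesis by blast
  qed (use z top in auto)
qed

lemma unref_bar_middle_notin:
  assumes lam: "lam \<in> unref_bar N" and "even (Max lam)"
  shows "Max lam div 2 \<notin> lam"
proof
  assume mid: "Max lam div 2 \<in> lam"
  have "0 < Max lam" using unref_barD(1-3)[OF lam] by (metis Max_in gr0I)
  then have "Max lam div 2 \<in> lam - {Max lam}" using mid by simp
  then obtain m where "2 * m \<noteq> Max lam" "Max lam div 2 = Max lam - m" "m \<le> Max lam"
    using unrefinable_reflect_missing[OF unref_barD(1-5)[OF lam]] unfolding missing_def by auto
  then show False using assms(2) by auto
qed

lemma symmetric_gaps_unref_bar:
  assumes "lam \<in> unref_bar N" and "odd (Max lam)"
  shows "symmetric_gaps (Max lam) lam"
proof -
  have "lam \<subseteq> {..Max lam}" using unref_barD(1)[OF assms(1)] by auto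
  moreover have "2 * x \<noteq> Max lam" for x using assms(2) by (metis dvd_triv_left)
  ultimately show ?thesis
    unfolding symmetric_gaps_def using unref_bar_mem_iff_complement_notin[OF assms(1)] by blast
qed

lemma double_Td:
  assumes "d \<le> n"
  shows "2 * Td n d + 2 * d = n * (n + 1)"
proof -
  have "2 * T n = n * (n + 1)" unfolding T_def by simp
  moreover have "n * 2 \<le> n * (n + 1)" by (cases n) auto
  ultimately show ?thesis unfolding Td_def using assms by linarith
qed

lemma double_sum_atLeastAtMost: "2 * \<Sum>{1..m::nat} = m * (m + 1)"
  using double_gauss_sum_from_Suc_0[of m, where ?'a = nat] by simp

lemma double_sum_even_pairing:
  fixes h :: nat
  assumes L: "L \<subseteq> {1..2 * h}" and top: "2 * h \<in> L" and mid: "h \<notin> L"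
    and pair: "\<And>x. 0 < x \<Longrightarrow> x < h \<Longrightarrow> x \<in> L \<longleftrightarrow> 2 * h - x \<notin> L"
  shows "\<exists>E. 2 * \<Sum>L = h * h + 3 * h + 4 * E"
proof -
  \<comment> \<open>L consists of 2h and one element of each pair {a, 2h - a}; taking 2h - a instead of a adds 2(h - a).\<close>
  define g where "g a = (if a \<in> L then a else 2 * h - a)" for a
  define E where "E = (\<Sum>a\<in>{1..<h}. if a \<in> L then 0 else h - a)"
  have L_eq: "L = insert (2 * h) (g ` {1..<h})"
  proof (intro equalityI subsetI)
    fix x assume x: "x \<in> L"
    have "1 \<le> x" "x \<le> 2 * h" "x \<noteq> h" using x L mid by auto
    then consider "x = 2 * h" | "0 < x" "x < h" | "h < x" "x < 2 * h" by fastforce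
    then show "x \<in> insert (2 * h) (g ` {1..<h})"
    proof cases
      case 2
      then show ?thesis using x unfolding g_def by (auto intro!: image_eqI[of _ _ x])
    next
      case 3
      then have "g (2 * h - x) = x" using x pair[of "2 * h - x"] unfolding g_def by auto
      then show ?thesis using 3 by (auto intro!: image_eqI[of _ _ "2 * h - x"])
    qed simp
  next
    fix x assume "x \<in> insert (2 * h) (g ` {1..<h})"
    then consider "x = 2 * h" | a where "a \<in> {1..<h}" "x = g a" by blast
    then show "x \<in> L"
    proof cases
      case (2 a)
      then show ?thesis using pair[of a] unfolding g_def by (auto split: if_splits)
    qed (use top in simp)
  qed
  have inj: "inj_on g {1..<h}"
    unfolding g_def by (intro inj_onI) (auto split: if_splits)
  have "2 * h \<notin> g ` {1..<h}" unfolding g_def by auto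
  then have "\<Sum>L = 2 * h + (\<Sum>a\<in>{1..<h}. g a)"
    unfolding L_eq using sum.reindex[OF inj, of "\<lambda>x. x"] by (simp add: o_def)
  also have "(\<Sum>a\<in>{1..<h}. g a) = (\<Sum>a\<in>{1..<h}. a + 2 * (if a \<in> L then 0 else h - a))"
    unfolding g_def by (intro sum.cong) auto
  also have "\<dots> = \<Sum>{1..<h} + 2 * E"
    unfolding E_def by (simp add: sum.distrib sum_distrib_left)
  finally have "2 * \<Sum>L = 4 * h + 2 * \<Sum>{1..<h} + 4 * E" by simp
  moreover have "2 * \<Sum>{1..<h} + h = h * h"
    using double_sum_atLeastAtMost[of "h - 1"] top L
    by (cases h) (auto simp: atLeastLessThanSuc_atLeastAtMost)
  ultimately show ?thesis by (intro exI[of _ E]) simp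
qed

lemma unrefI:
  assumes "finite W" and "0 \<notin> W" and "\<Sum>W = N" and "2 \<le> card W"
    and "\<And>a b. a \<notin> W \<Longrightarrow> b \<notin> W \<Longrightarrow> 0 < a \<Longrightarrow> 0 < b \<Longrightarrow> a \<noteq> b \<Longrightarrow> a + b \<notin> W"
  shows "W \<in> unref N"
proof -
  have "\<not> refinable W"
    unfolding refinable_def missing_def using assms(5) by fastforce
  then show ?thesis
    unfolding unref_def distinct_partition_def using assms(1-4) by blast
qed

lemma unref_Td_witness_4:
  assumes "4 \<le> n"
  shows "insert (2 * n - 5) {1..n - 2} \<in> unref (Td n 4)"
proof -
  obtain m where n: "n = m + 4" using assms le_Suc_ex by (metis add.commute)
  have "\<Sum>(insert (2 * m + 3) {1..m + 2}) = \<Sum>{1..m + 2} + (2 * m + 3)" by simp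
  moreover have "2 * \<Sum>{1..m + 2} = (m + 2) * (m + 3)"
    by (subst double_sum_atLeastAtMost) (simp add: algebra_simps)
  moreover have "2 * Td n 4 + 8 = (m + 4) * (m + 5)" using double_Td[of 4 n] n by simp
  ultimately have "\<Sum>(insert (2 * m + 3) {1..m + 2}) = Td n 4"
    by (simp add: algebra_simps)
  moreover have "card {1, 2 :: nat} \<le> card (insert (2 * m + 3) {1..m + 2})"
    by (intro card_mono) auto
  ultimately have "insert (2 * m + 3) {1..m + 2} \<in> unref (Td n 4)"
    by (intro unrefI) auto
  then show ?thesis using n by (simp add: numeral_eq_Suc)
qed

lemma unref_Td_witness:
  assumes "1 \<le> k" and "2 * k + 5 \<le> n"
  shows "({1..n - 2} - {n - 3, n - k - 3}) \<union> {n + k - 2, 2 * n - 5} \<in> unref (Td n (n - 2 * k))"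
proof -
  obtain p where n: "n = 2 * k + 5 + p" using assms(2) le_Suc_ex by blast
  define A where "A = {1..2 * k + 3 + p}"
  define D where "D = {2 * k + 2 + p, k + 2 + p}"
  define W where "W = (A - D) \<union> {3 * k + 3 + p, 4 * k + 5 + 2 * p}"
  have mem: "x \<in> W \<longleftrightarrow> (1 \<le> x \<and> x \<le> 2 * k + 3 + p \<and> x \<noteq> 2 * k + 2 + p \<and> x \<noteq> k + 2 + p)
      \<or> x = 3 * k + 3 + p \<or> x = 4 * k + 5 + 2 * p" for x
    unfolding W_def A_def D_def by auto
  have "\<Sum>W = \<Sum>(A - D) + (3 * k + 3 + p) + (4 * k + 5 + 2 * p)"
    unfolding W_def using assms(1) by (subst sum.union_disjoint) (auto simp: A_def)
  moreover have "\<Sum>A = \<Sum>(A - D) + (2 * k + 2 + p) + (k + 2 + p)"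
    using sum.subset_diff[of D A "\<lambda>x. x"] assms(1) by (simp add: A_def D_def)
  moreover have "2 * \<Sum>A = (2 * k + 3 + p) * (2 * k + 4 + p)"
    unfolding A_def by (subst double_sum_atLeastAtMost) (simp add: algebra_simps)
  moreover have "2 * Td n (n - 2 * k) + 2 * (n - 2 * k) = n * (n + 1)"
    using double_Td[of "n - 2 * k" n] by simp
  ultimately have "\<Sum>W = Td n (n - 2 * k)"
    unfolding n by (simp add: algebra_simps)
  moreover have "card {1, 3 * k + 3 + p} \<le> card W"
    by (intro card_mono) (auto simp: mem W_def A_def D_def)
  moreover have "a + b \<notin> W" if "a \<notin> W" "b \<notin> W" "0 < a" "0 < b" "a \<noteq> b" for a b
    using that unfolding mem by auto
  ultimately have "W \<in> unref (Td n (n - 2 * k))"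
    by (intro unrefI) (auto simp: mem W_def A_def)
  moreover have "n - 2 = 2 * k + 3 + p" "n - 3 = 2 * k + 2 + p" "n - k - 3 = k + 2 + p"
    "n + k - 2 = 3 * k + 3 + p" "2 * n - 5 = 4 * k + 5 + 2 * p"
    unfolding n by simp_all
  then have "W = ({1..n - 2} - {n - 3, n - k - 3}) \<union> {n + k - 2, 2 * n - 5}"
    unfolding W_def A_def D_def by simp
  ultimately show ?thesis by simp
qed

lemma finite_unref: "finite (unref N)"
proof (rule finite_subset)
  show "unref N \<subseteq> Pow {..N}"
    unfolding unref_def distinct_partition_def by (auto intro: member_le_sum[where f = id, simplified])
qed simp

lemma Max_le_Max_unref_max:
  assumes "W \<in> unref N" and "lam \<in> unref_max N"
  shows "Max W \<le> Max lam"
  using assms finite_unref[of N] unfolding unref_max_def by auto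

lemma Max_unref_max_Td_ge:
  assumes "1 \<le> k" and "2 * k + 4 \<le> n" and "lam \<in> unref_max (Td n (n - 2 * k))"
  shows "2 * n - 5 \<le> Max lam"
proof -
  obtain W where W: "W \<in> unref (Td n (n - 2 * k))" "2 * n - 5 \<in> W"
  proof (cases "n = 2 * k + 4")
    case True
    then have "n - 2 * k = 4" by simp
    then show ?thesis using that unref_Td_witness_4[of n] True by auto
  next
    case False
    then have "2 * k + 5 \<le> n" using assms(2) by simp
    from that[OF unref_Td_witness[OF assms(1) this]] show ?thesis by simp
  qed
  have "finite W" using W(1) unfolding unref_def distinct_partition_def by auto
  then have "2 * n - 5 \<le> Max W" using W(2) by simp
  also have "\<dots> \<le> Max lam" using Max_le_Max_unref_max[OF W(1) assms(3)] .
  finally show ?thesis .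
qed

lemma unref_bar_even_double_sum:
  assumes lam: "lam \<in> unref_bar N" and Max: "Max lam = 2 * h"
  shows "\<exists>E. 2 * N = h * h + 3 * h + 4 * E"
proof -
  note fin = unref_barD(1)[OF lam] and z = unref_barD(3)[OF lam]
  have "lam \<subseteq> {1..2 * h}"
  proof
    fix x assume x: "x \<in> lam"
    then have "x \<noteq> 0" using z by metis
    moreover have "x \<le> Max lam" using fin x by simp
    ultimately show "x \<in> {1..2 * h}" using Max by (simp add: Suc_le_eq)
  qed
  moreover have "2 * h \<in> lam" using fin unref_barD(2)[OF lam] Max by (metis Max_in)
  moreover have "h \<notin> lam" using unref_bar_middle_notin[OF lam] Max by simp
  moreover have "x \<in> lam \<longleftrightarrow> 2 * h - x \<notin> lam" if "0 < x" "x < h" for x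
    using unref_bar_mem_iff_complement_notin[OF lam, of x] that Max by simp
  ultimately show ?thesis
    using double_sum_even_pairing unref_barD(6)[OF lam] by blast
qed

lemma odd_Max_unref_bar_Td:
  assumes "1 \<le> k" and "2 * k + 4 \<le> n" and lam: "lam \<in> unref_bar (Td n (n - 2 * k))"
  shows "odd (Max lam)"
proof
  assume "even (Max lam)"
  then obtain h where Max: "Max lam = 2 * h" by blast
  then obtain E where E: "2 * Td n (n - 2 * k) = h * h + 3 * h + 4 * E"
    using unref_bar_even_double_sum[OF lam] by blast
  have Td: "2 * Td n (n - 2 * k) + 2 * (n - 2 * k) = n * (n + 1)"
    using double_Td[of "n - 2 * k" n] by simp
  have "2 * n - 5 \<le> 2 * h" using Max_unref_max_Td_ge[OF assms(1,2) unref_barD(7)[OF lam]] Max by simp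
  then consider "n = h + 2" | "n \<le> h + 1" by linarith
  then show False
  proof cases
    case 1
    then have "h * h + 3 * h + 4 * E + 2 * (n - 2 * k) = h * h + 5 * h + 6"
      using E Td by (simp add: algebra_simps)
    then have "4 * E = 4 * k + 2" using 1 assms(2) by linarith
    then show False by presburger
  next
    case 2
    then have "n * n \<le> (h + 1) * (h + 1)" by (intro mult_le_mono)
    then show False using E Td 2 assms(2) \<open>2 * n - 5 \<le> 2 * h\<close> by (simp add: algebra_simps)
  qed
qed

theorem lemma4p3:
  fixes n k :: nat and lam :: "nat set"
  assumes "2 \<le> 2 * k" and "2 * k + 4 \<le> n"
    and "lam \<in> unref_bar (Td n (n - 2 * k))"
  shows "\<forall>i \<in> {1..n - 2}. hook (KN (- lam)) i 1 = hook (KN (- lam)) 1 i"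
proof -
  have "odd (Max lam)" using odd_Max_unref_bar_Td assms by simp
  then have "symmetric_gaps (Max lam) lam" using symmetric_gaps_unref_bar assms(3) by blast
  then have "(i, j) \<in> KN (- lam) \<longleftrightarrow> (j, i) \<in> KN (- lam)" for i j
    using KN_Compl_symmetric_gaps_transpose unref_barD(1)[OF assms(3)] by blast
  \<comment> \<open>The diagram is self-conjugate.\<close>
  then show ?thesis using hook_transpose by blast
qed

end
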